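(* Let $\rho_A,\rho_B\in\mathcal{P}(\mathcal{X})$, $h=1/N$, and let $(\rho_h,m_h)\in V^1_{n,h}\times V^0_{e,h}$ with $\mathcal{E}_h(\rho_h,m_h)\le\bar E<\infty$. Then there is a constant $\bar M<\infty$ depending only on $(\mathcal{X},Q,\pi)$ and $\bar E$ (and not on $h$) such that $\|m_h\|_{L^2([0,1],\mathbb{R}^{\mathcal{X}\times\mathcal{X}})}\le\bar M$.
   Context: Setting: $\mathcal{X}$ finite, $Q:\mathcal{X}\times\mathcal{X}\to[0,\infty)$ with $Q(x,x)=0$, irreducible, reversible with respect to its stationary distribution $\pi>0$, $\sum\pi=1$. $\mathcal{P}(\mathcal{X})=\{\rho\ge0:\sum_x\pi(x)\rho(x)=1\}$. $(\mathrm{div}_{\mathcal{X}}\Psi)(x)=\frac12\sum_yQ(x,y)(\Psi(y,x)-\Psi(x,y))$. $\theta:[0,\infty)^2\to[0,\infty)$ is continuous, concave, 1-homogeneous, symmetric, $C^\infty$ on $(0,\infty)^2$, $\theta(0,s)=\theta(s,0)=0$, $\theta(s,s)=s$, $\theta>0$ on $(0,\infty)^2$, nondecreasing in each argument; $\theta=-\infty$ if an argument is negative. $\alpha(s,t,m)=m^2/\theta(s,t)$ if $\theta(s,t)>0$, $0$ if $\theta(s,t)=0=m$, $+\infty$ otherwise. Time discretization: $h=1/N$, $t_i=ih$, $I_i=[t_i,t_{i+1})$; $V^1_{n,h}$: continuous functions $[0,1]\to\mathbb{R}^{\mathcal{X}}$ affine on each $I_i$; $V^0_{e,h}$: functions $[0,1]\to\mathbb{R}^{\mathcal{X}\times\mathcal{X}}$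 constant on each $I_i$ (value $m(t_i)$). $\mathcal{CE}_h(\rho_A,\rho_B)$: $(\rho_h,m_h)\in V^1_{n,h}\times V^0_{e,h}$ with $\rho_h(t_0)=\rho_A$, $\rho_h(t_N)=\rho_B$ and $(\rho_h(t_{i+1})-\rho_h(t_i))/h+\mathrm{div}_{\mathcal{X}}m_h(t_i)=0$ for $i=0,\dots,N-1$. For $\rho_h\in V^1_{n,h}$, $(\mathrm{avg}_h\rho_h)(t_i)=\frac12(\rho_h(t_i)+\rho_h(t_{i+1}))$. $\mathcal{A}_h(\rho_h,m_h)=\frac h2\sum_{i=0}^{N-1}\sum_{x,y}\alpha((\mathrm{avg}_h\rho_h)(t_i,x),(\mathrm{avg}_h\rho_h)(t_i,y),m_h(t_i,x,y))Q(x,y)\pi(x)$, and $\mathcal{E}_h(\rho_h,m_h)=\mathcal{A}_h(\rho_h,m_h)$ if $(\rho_h,m_h)\in\mathcal{CE}_h(\rho_A,\rho_B)$ and $+\infty$ otherwise. *)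

theory Defs
  imports "HOL-Analysis.Analysis"
begin

definition markov_setting :: "('x::finite \<Rightarrow> 'x \<Rightarrow> real) \<Rightarrow> ('x \<Rightarrow> real) \<Rightarrow> bool" where
  "markov_setting Q \<pi> \<longleftrightarrow>
     (\<forall>x y. Q x y \<ge> 0) \<and> (\<forall>x. Q x x = 0) \<and>
     (\<forall>x y. (x, y) \<in> {(a, b). Q a b > 0}\<^sup>*) \<and>
     (\<forall>x. \<pi> x > 0) \<and> (\<Sum>x\<in>UNIV. \<pi> x) = 1 \<and>
     (\<forall>y. (\<Sum>x\<in>UNIV. \<pi> x * Q x y) = \<pi> y * (\<Sum>z\<in>UNIV. Q y z)) \<and>
     (\<forall>x y. \<pi> x * Q x y = \<pi> y * Q y x)"

definition prob_density :: "('x::finite \<Rightarrow> real) \<Rightarrow> ('x \<Rightarrow> real) \<Rightarrow> bool" where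
  "prob_density \<pi> \<rho> \<longleftrightarrow> (\<forall>x. \<rho> x \<ge> 0) \<and> (\<Sum>x\<in>UNIV. \<pi> x * \<rho> x) = 1"

definition divX :: "('x::finite \<Rightarrow> 'x \<Rightarrow> real) \<Rightarrow> ('x \<Rightarrow> 'x \<Rightarrow> real) \<Rightarrow> 'x \<Rightarrow> real" where
  "divX Q \<Psi> x = (1/2) * (\<Sum>y\<in>UNIV. Q x y * (\<Psi> y x - \<Psi> x y))"

text \<open>C-infinity on an open set S: f belongs to a class of functions that are
  differentiable on S and whose directional derivatives (in every direction v)
  belong again to the class.\<close>
definition smooth_on :: "(real \<times> real) set \<Rightarrow> (real \<times> real \<Rightarrow> real) \<Rightarrow> bool" where
  "smooth_on S f \<longleftrightarrow> (\<exists>F. f \<in> F \<and>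
     (\<forall>g\<in>F. \<exists>g'. (\<forall>z\<in>S. (g has_derivative g' z) (at z)) \<and> (\<forall>v. (\<lambda>z. g' z v) \<in> F)))"

definition admissible_theta :: "(real \<Rightarrow> real \<Rightarrow> real) \<Rightarrow> bool" where
  "admissible_theta \<theta> \<longleftrightarrow>
     continuous_on ({0..} \<times> {0..}) (\<lambda>(s, t). \<theta> s t) \<and>
     (\<forall>s t s' t' l. s \<ge> 0 \<longrightarrow> t \<ge> 0 \<longrightarrow> s' \<ge> 0 \<longrightarrow> t' \<ge> 0 \<longrightarrow> 0 \<le> l \<longrightarrow> l \<le> 1 \<longrightarrow>
        l * \<theta> s t + (1 - l) * \<theta> s' t' \<le> \<theta> (l * s + (1 - l) * s') (l * t + (1 - l) * t')) \<and>
     (\<forall>l s t. l \<ge> 0 \<longrightarrow> s \<ge> 0 \<longrightarrow> t \<ge> 0 \<longrightarrow> \<theta> (l * s) (l * t) = l * \<theta> s t) \<and>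
     (\<forall>s t. s \<ge> 0 \<longrightarrow> t \<ge> 0 \<longrightarrow> \<theta> s t = \<theta> t s) \<and>
     smooth_on ({0<..} \<times> {0<..}) (\<lambda>(s, t). \<theta> s t) \<and>
     (\<forall>s. s \<ge> 0 \<longrightarrow> \<theta> 0 s = 0 \<and> \<theta> s 0 = 0) \<and>
     (\<forall>s. s \<ge> 0 \<longrightarrow> \<theta> s s = s) \<and>
     (\<forall>s t. s > 0 \<longrightarrow> t > 0 \<longrightarrow> \<theta> s t > 0) \<and>
     (\<forall>s s' t. 0 \<le> s \<longrightarrow> s \<le> s' \<longrightarrow> 0 \<le> t \<longrightarrow> \<theta> s t \<le> \<theta> s' t \<and> \<theta> t s \<le> \<theta> t s')"

text \<open>alpha; theta is taken to be minus infinity when an argument is negative,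
  hence alpha is then +infinity.\<close>
definition alpha :: "(real \<Rightarrow> real \<Rightarrow> real) \<Rightarrow> real \<Rightarrow> real \<Rightarrow> real \<Rightarrow> ereal" where
  "alpha \<theta> s t m =
     (if s \<ge> 0 \<and> t \<ge> 0 \<and> \<theta> s t > 0 then ereal (m\<^sup>2 / \<theta> s t)
      else if s \<ge> 0 \<and> t \<ge> 0 \<and> \<theta> s t = 0 \<and> m = 0 then 0
      else \<infinity>)"

definition tgrid :: "nat \<Rightarrow> nat \<Rightarrow> real" where
  "tgrid N i = real i / real N"

definition V1 :: "nat \<Rightarrow> (real \<Rightarrow> 'x \<Rightarrow> real) set" where
  "V1 N = {\<rho>. continuous_on {0..1} \<rho> \<and>
     (\<forall>i<N. \<forall>t\<in>{tgrid N i..tgrid N (Suc i)}. \<forall>x.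
        \<rho> t x = \<rho> (tgrid N i) x + (t - tgrid N i) * real N * (\<rho> (tgrid N (Suc i)) x - \<rho> (tgrid N i) x))}"

definition V0 :: "nat \<Rightarrow> (real \<Rightarrow> 'x \<Rightarrow> 'x \<Rightarrow> real) set" where
  "V0 N = {m. \<forall>i<N. \<forall>t\<in>{tgrid N i..<tgrid N (Suc i)}. m t = m (tgrid N i)}"

definition CE_h :: "('x::finite \<Rightarrow> 'x \<Rightarrow> real) \<Rightarrow> nat \<Rightarrow> ('x \<Rightarrow> real) \<Rightarrow> ('x \<Rightarrow> real)
    \<Rightarrow> ((real \<Rightarrow> 'x \<Rightarrow> real) \<times> (real \<Rightarrow> 'x \<Rightarrow> 'x \<Rightarrow> real)) set" where
  "CE_h Q N \<rho>A \<rho>B = {(\<rho>, m). \<rho> \<in> V1 N \<and> m \<in> V0 N \<and>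
      \<rho> (tgrid N 0) = \<rho>A \<and> \<rho> (tgrid N N) = \<rho>B \<and>
      (\<forall>i<N. \<forall>x. (\<rho> (tgrid N (Suc i)) x - \<rho> (tgrid N i) x) * real N
                    + divX Q (m (tgrid N i)) x = 0)}"

definition avg_h :: "nat \<Rightarrow> (real \<Rightarrow> 'x \<Rightarrow> real) \<Rightarrow> nat \<Rightarrow> 'x \<Rightarrow> real" where
  "avg_h N \<rho> i x = (\<rho> (tgrid N i) x + \<rho> (tgrid N (Suc i)) x) / 2"

definition A_h :: "('x::finite \<Rightarrow> 'x \<Rightarrow> real) \<Rightarrow> ('x \<Rightarrow> real) \<Rightarrow> (real \<Rightarrow> real \<Rightarrow> real) \<Rightarrow> nat
    \<Rightarrow> (real \<Rightarrow> 'x \<Rightarrow> real) \<Rightarrow> (real \<Rightarrow> 'x \<Rightarrow> 'x \<Rightarrow> real) \<Rightarrow> ereal" where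
  "A_h Q \<pi> \<theta> N \<rho> m = ereal (1 / (2 * real N)) *
     (\<Sum>i<N. \<Sum>x\<in>UNIV. \<Sum>y\<in>UNIV.
        alpha \<theta> (avg_h N \<rho> i x) (avg_h N \<rho> i y) (m (tgrid N i) x y) * ereal (Q x y * \<pi> x))"

definition E_h :: "('x::finite \<Rightarrow> 'x \<Rightarrow> real) \<Rightarrow> ('x \<Rightarrow> real) \<Rightarrow> (real \<Rightarrow> real \<Rightarrow> real) \<Rightarrow> nat
    \<Rightarrow> ('x \<Rightarrow> real) \<Rightarrow> ('x \<Rightarrow> real)
    \<Rightarrow> (real \<Rightarrow> 'x \<Rightarrow> real) \<Rightarrow> (real \<Rightarrow> 'x \<Rightarrow> 'x \<Rightarrow> real) \<Rightarrow> ereal" where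
  "E_h Q \<pi> \<theta> N \<rho>A \<rho>B \<rho> m =
     (if (\<rho>, m) \<in> CE_h Q N \<rho>A \<rho>B then A_h Q \<pi> \<theta> N \<rho> m else \<infinity>)"

definition L2norm_edges :: "('x::finite \<Rightarrow> 'x \<Rightarrow> real) \<Rightarrow> ('x \<Rightarrow> real) \<Rightarrow> (real \<Rightarrow> 'x \<Rightarrow> 'x \<Rightarrow> real) \<Rightarrow> real" where
  "L2norm_edges Q \<pi> m = sqrt (integral {0..1}
      (\<lambda>t. (1/2) * (\<Sum>x\<in>UNIV. \<Sum>y\<in>UNIV. (m t x y)\<^sup>2 * Q x y * \<pi> x)))"

end

theory Submission imports Defs begin

text \<open>Reversibility conserves mass, so each time average of the density is a \<open>\<pi>\<close>-weighted
  probability vector; finite action forces it to be nonnegative, since by irreducibility every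
  state has an outgoing edge. Hence it is bounded by \<open>K = \<Sum>x. 1 / \<pi> x\<close>, and so is \<open>\<theta>\<close> of it,
  by monotonicity and \<open>\<theta>(K, K) = K\<close>. Termwise \<open>m\<^sup>2 \<le> K \<cdot> m\<^sup>2 / \<theta>\<close>, so the squared \<open>L\<^sup>2\<close> norm
  of the piecewise constant flux, a Riemann sum, is at most \<open>K\<close> times the action.\<close>

lemma sum_weighted_divX_eq_0:
  assumes rev: "\<And>x y. \<pi> x * Q x y = \<pi> y * Q y x"
  shows "(\<Sum>x\<in>UNIV. \<pi> x * divX Q \<Psi> x) = 0"
proof -
  have "(\<Sum>x\<in>UNIV. \<Sum>y\<in>UNIV. \<pi> x * Q x y * \<Psi> y x) = (\<Sum>y\<in>UNIV. \<Sum>x\<in>UNIV. \<pi> x * Q x y * \<Psi> y x)"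
    by (rule sum.swap)
  also have "\<dots> = (\<Sum>y\<in>UNIV. \<Sum>x\<in>UNIV. \<pi> y * Q y x * \<Psi> y x)"
    using rev by simp
  finally have swap: "(\<Sum>x\<in>UNIV. \<Sum>y\<in>UNIV. \<pi> x * Q x y * \<Psi> y x)
      = (\<Sum>x\<in>UNIV. \<Sum>y\<in>UNIV. \<pi> x * Q x y * \<Psi> x y)" .
  have "(\<Sum>x\<in>UNIV. \<pi> x * divX Q \<Psi> x) = (1/2) * ((\<Sum>x\<in>UNIV. \<Sum>y\<in>UNIV. \<pi> x * Q x y * \<Psi> y x)
      - (\<Sum>x\<in>UNIV. \<Sum>y\<in>UNIV. \<pi> x * Q x y * \<Psi> x y))"
    unfolding divX_def
    by (simp add: sum_distrib_left algebra_simps flip: sum_subtractf)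
  with swap show ?thesis by simp
qed

lemma CE_h_mass_conserved:
  assumes rev: "\<And>x y. \<pi> x * Q x y = \<pi> y * Q y x"
    and ce: "(\<rho>, m) \<in> CE_h Q N \<rho>A \<rho>B" and N: "N > 0"
    and \<rho>A: "(\<Sum>x\<in>UNIV. \<pi> x * \<rho>A x) = 1" and "i \<le> N"
  shows "(\<Sum>x\<in>UNIV. \<pi> x * \<rho> (tgrid N i) x) = 1"
  using \<open>i \<le> N\<close>
proof (induction i)
  case 0
  then show ?case using ce \<rho>A unfolding CE_h_def by auto
next
  case (Suc i)
  have "\<rho> (tgrid N (Suc i)) x = \<rho> (tgrid N i) x - divX Q (m (tgrid N i)) x / real N" for x
    using ce Suc.prems N unfolding CE_h_def by (auto simp: field_simps)
  then have "(\<Sum>x\<in>UNIV. \<pi> x * \<rho> (tgrid N (Suc i)) x)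
      = (\<Sum>x\<in>UNIV. \<pi> x * \<rho> (tgrid N i) x) - (\<Sum>x\<in>UNIV. \<pi> x * divX Q (m (tgrid N i)) x) / real N"
    by (simp add: right_diff_distrib sum_subtractf sum_divide_distrib)
  then show ?case
    using Suc sum_weighted_divX_eq_0[OF rev] by simp
qed

lemma CE_h_avg_h_mass:
  assumes rev: "\<And>x y. \<pi> x * Q x y = \<pi> y * Q y x"
    and ce: "(\<rho>, m) \<in> CE_h Q N \<rho>A \<rho>B" and N: "N > 0"
    and \<rho>A: "(\<Sum>x\<in>UNIV. \<pi> x * \<rho>A x) = 1" and "i < N"
  shows "(\<Sum>x\<in>UNIV. \<pi> x * avg_h N \<rho> i x) = 1"
proof -
  have "(\<Sum>x\<in>UNIV. \<pi> x * avg_h N \<rho> i x)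
      = ((\<Sum>x\<in>UNIV. \<pi> x * \<rho> (tgrid N i) x) + (\<Sum>x\<in>UNIV. \<pi> x * \<rho> (tgrid N (Suc i)) x)) / 2"
    unfolding avg_h_def by (simp add: distrib_left flip: sum_divide_distrib sum.distrib)
  with CE_h_mass_conserved[OF assms(1-4)] \<open>i < N\<close> show ?thesis by simp
qed

lemma markov_setting_out_edge:
  assumes "markov_setting Q \<pi>" "Q x y > 0"
  obtains w where "Q z w > 0"
proof -
  have "(z, x) \<in> {(a, b). Q a b > 0}\<^sup>*"
    using assms(1) unfolding markov_setting_def by blast
  then show thesis
    by (cases rule: converse_rtranclE) (use assms(2) that in blast)+
qed

lemma alpha_nonneg: "alpha \<theta> s t m \<ge> 0"
  unfolding alpha_def by auto

lemma alpha_finite_imp_nonneg: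
  assumes "alpha \<theta> s t m \<noteq> \<infinity>"
  shows "s \<ge> 0" "t \<ge> 0"
  using assms unfolding alpha_def by (auto split: if_splits)

lemma nonneg_if_alpha_finite_on_edges:
  assumes "markov_setting Q \<pi>"
    and fin: "\<And>x y. Q x y > 0 \<Longrightarrow> alpha \<theta> (a x) (a y) (\<mu> x y) \<noteq> \<infinity>"
    and "Q x y > 0"
  shows "a z \<ge> 0"
proof -
  obtain w where "Q z w > 0"
    using markov_setting_out_edge[OF assms(1,3)] .
  then show ?thesis using alpha_finite_imp_nonneg(1) fin by blast
qed

lemma le_inverse_weight_of_mass:
  fixes a \<pi> :: "'x::finite \<Rightarrow> real"
  assumes \<pi>: "\<And>x. \<pi> x > 0" and a: "\<And>x. a x \<ge> 0" and mass: "(\<Sum>x\<in>UNIV. \<pi> x * a x) = 1"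
  shows "a z \<le> 1 / \<pi> z"
proof -
  have "\<pi> z * a z \<le> (\<Sum>x\<in>UNIV. \<pi> x * a x)"
    by (rule member_le_sum) (auto intro!: mult_nonneg_nonneg a less_imp_le[OF \<pi>])
  with mass \<pi>[of z] show ?thesis by (simp add: field_simps)
qed

lemma admissible_theta_le:
  assumes \<theta>: "admissible_theta \<theta>" and "0 \<le> s" "s \<le> K" "0 \<le> t" "t \<le> K"
  shows "\<theta> s t \<le> K"
proof -
  have mono: "\<And>s s' t. 0 \<le> s \<Longrightarrow> s \<le> s' \<Longrightarrow> 0 \<le> t \<Longrightarrow> \<theta> s t \<le> \<theta> s' t \<and> \<theta> t s \<le> \<theta> t s'"
    and diag: "\<And>s. s \<ge> 0 \<Longrightarrow> \<theta> s s = s"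
    using \<theta> unfolding admissible_theta_def by blast+
  have "\<theta> s t \<le> \<theta> K t" using mono assms(2-5) by blast
  also have "\<dots> \<le> \<theta> K K" using mono assms(2-5) by force
  finally show ?thesis using diag assms(2,3) by simp
qed

lemma square_le_mult_alpha:
  assumes \<theta>: "admissible_theta \<theta>" and "s \<le> K" "t \<le> K" "K > 0"
  shows "ereal (m\<^sup>2) \<le> ereal K * alpha \<theta> s t m"
proof (cases "s \<ge> 0 \<and> t \<ge> 0 \<and> \<theta> s t > 0")
  case True
  then have "\<theta> s t \<le> K" using admissible_theta_le[OF \<theta>] assms(2,3) by blast
  then have "\<theta> s t * (m\<^sup>2 / \<theta> s t) \<le> K * (m\<^sup>2 / \<theta> s t)"
    using True by (intro mult_right_mono) auto
  with True show ?thesis by (simp add: alpha_def)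
qed (use \<open>K > 0\<close> in \<open>auto simp: alpha_def\<close>)

lemma has_integral_tgrid_step_function:
  fixes f :: "real \<Rightarrow> real"
  assumes N: "N > 0" and step: "\<And>i t. i < N \<Longrightarrow> t \<in> {tgrid N i..<tgrid N (Suc i)} \<Longrightarrow> f t = c i"
  shows "(f has_integral (\<Sum>i<N. c i / real N)) {0..1}"
proof -
  have "(f has_integral (\<Sum>i<k. c i / real N)) {0..tgrid N k}" if "k \<le> N" for k
    using that
  proof (induction k)
    case 0
    then show ?case by (simp add: tgrid_def has_integral_refl)
  next
    case (Suc k)
    have le: "tgrid N k \<le> tgrid N (Suc k)"
      by (simp add: tgrid_def divide_right_mono)
    have "((\<lambda>_. c k) has_integral (c k / real N)) {tgrid N k..tgrid N (Suc k)}"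
      using has_integral_const_real[of "c k" "tgrid N k" "tgrid N (Suc k)"] le N
      by (simp add: tgrid_def field_simps)
    then have "(f has_integral (c k / real N)) {tgrid N k..tgrid N (Suc k)}"
      by (rule has_integral_spike_finite[of "{tgrid N (Suc k)}", rotated 2])
        (use step[of k] Suc.prems in auto)
    moreover have "0 \<le> tgrid N k"
      by (simp add: tgrid_def)
    ultimately show ?case
      using has_integral_combine[OF _ le Suc.IH] Suc.prems by simp
  qed
  moreover have "tgrid N N = 1"
    using N by (simp add: tgrid_def)
  ultimately show ?thesis by (metis order_refl)
qed

lemma L2norm_edges_V0:
  assumes "m \<in> V0 N" "N > 0"
  shows "L2norm_edges Q \<pi> m
    = sqrt (1 / (2 * real N) * (\<Sum>i<N. \<Sum>x\<in>UNIV. \<Sum>y\<in>UNIV. (m (tgrid N i) x y)\<^sup>2 * Q x y * \<pi> x))"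
proof -
  define e where "e t = (\<Sum>x\<in>UNIV. \<Sum>y\<in>UNIV. (m t x y)\<^sup>2 * Q x y * \<pi> x)" for t
  have step: "(1/2) * e t = (1/2) * e (tgrid N i)"
    if "i < N" "t \<in> {tgrid N i..<tgrid N (Suc i)}" for i t
  proof -
    have "m t = m (tgrid N i)"
      using assms(1) that unfolding V0_def by blast
    then show ?thesis by (simp add: e_def)
  qed
  have "((\<lambda>t. (1/2) * e t) has_integral (\<Sum>i<N. (1/2) * e (tgrid N i) / real N)) {0..1}"
    using has_integral_tgrid_step_function[OF assms(2) step] .
  then have "integral {0..1} (\<lambda>t. (1/2) * e t) = (\<Sum>i<N. (1/2) * e (tgrid N i) / real N)"
    by (rule integral_unique)
  also have "\<dots> = 1 / (2 * real N) * (\<Sum>i<N. e (tgrid N i))"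
    by (simp add: sum_distrib_left)
  finally show ?thesis
    unfolding L2norm_edges_def e_def by simp
qed

lemma A_h_finite_imp_alpha_finite:
  assumes fin: "A_h Q \<pi> \<theta> N \<rho> m \<noteq> \<infinity>" and "N > 0" "i < N" and edge: "Q x y * \<pi> x > 0"
  shows "alpha \<theta> (avg_h N \<rho> i x) (avg_h N \<rho> i y) (m (tgrid N i) x y) \<noteq> \<infinity>"
proof -
  have "(\<Sum>i<N. \<Sum>x\<in>UNIV. \<Sum>y\<in>UNIV.
      alpha \<theta> (avg_h N \<rho> i x) (avg_h N \<rho> i y) (m (tgrid N i) x y) * ereal (Q x y * \<pi> x)) \<noteq> \<infinity>"
    using fin \<open>N > 0\<close> unfolding A_h_def by auto
  then have "alpha \<theta> (avg_h N \<rho> i x) (avg_h N \<rho> i y) (m (tgrid N i) x y) * ereal (Q x y * \<pi> x) \<noteq> \<infinity>"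
    using \<open>i < N\<close> by (simp add: sum_Pinfty)
  with edge show ?thesis by auto
qed

lemma A_h_finite_imp_avg_h_le:
  assumes ms: "markov_setting Q \<pi>" and N: "N > 0" and ce: "(\<rho>, m) \<in> CE_h Q N \<rho>A \<rho>B"
    and \<rho>A: "prob_density \<pi> \<rho>A" and fin: "A_h Q \<pi> \<theta> N \<rho> m \<noteq> \<infinity>"
    and "i < N" "Q x y > 0"
  shows "avg_h N \<rho> i z \<le> (\<Sum>x\<in>UNIV. 1 / \<pi> x)"
proof -
  have \<pi>: "\<And>x. \<pi> x > 0" and rev: "\<And>x y. \<pi> x * Q x y = \<pi> y * Q y x"
    using ms unfolding markov_setting_def by auto
  have "alpha \<theta> (avg_h N \<rho> i x) (avg_h N \<rho> i y) (m (tgrid N i) x y) \<noteq> \<infinity>" if "Q x y > 0" for x y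
    using A_h_finite_imp_alpha_finite[OF fin N \<open>i < N\<close>] that \<pi>[of x] by simp
  then have "\<And>z. avg_h N \<rho> i z \<ge> 0"
    using nonneg_if_alpha_finite_on_edges[OF ms _ \<open>Q x y > 0\<close>] by blast
  then have "avg_h N \<rho> i z \<le> 1 / \<pi> z"
    using le_inverse_weight_of_mass \<pi> CE_h_avg_h_mass[OF rev ce N _ \<open>i < N\<close>] \<rho>A
    unfolding prob_density_def by blast
  also have "\<dots> \<le> (\<Sum>x\<in>UNIV. 1 / \<pi> x)"
    using \<pi> by (intro member_le_sum) (auto intro: less_imp_le)
  finally show ?thesis .
qed

lemma kinetic_energy_le_A_h:
  assumes ms: "markov_setting Q \<pi>" and \<theta>: "admissible_theta \<theta>" and N: "N > 0"
    and ce: "(\<rho>, m) \<in> CE_h Q N \<rho>A \<rho>B" and \<rho>A: "prob_density \<pi> \<rho>A"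
    and fin: "A_h Q \<pi> \<theta> N \<rho> m \<noteq> \<infinity>"
  shows "ereal (1 / (2 * real N) * (\<Sum>i<N. \<Sum>x\<in>UNIV. \<Sum>y\<in>UNIV. (m (tgrid N i) x y)\<^sup>2 * Q x y * \<pi> x))
    \<le> ereal (\<Sum>x\<in>UNIV. 1 / \<pi> x) * A_h Q \<pi> \<theta> N \<rho> m"
proof -
  have \<pi>: "\<And>x. \<pi> x > 0" and Q: "\<And>x y. Q x y \<ge> 0"
    using ms unfolding markov_setting_def by auto
  define K where "K = (\<Sum>x\<in>UNIV. 1 / \<pi> x)"
  have K: "K > 0"
    unfolding K_def using \<pi> by (intro sum_pos) auto
  define a where "a = avg_h N \<rho>"
  define T where "T i x y = alpha \<theta> (a i x) (a i y) (m (tgrid N i) x y) * ereal (Q x y * \<pi> x)" for i x y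
  have T_nonneg: "T i x y \<ge> 0" for i x y
    unfolding T_def using alpha_nonneg Q \<pi> by (simp add: less_imp_le)
  have termwise: "ereal ((m (tgrid N i) x y)\<^sup>2 * Q x y * \<pi> x) \<le> ereal K * T i x y"
    if "i < N" for i x y
  proof (cases "Q x y > 0")
    case True
    note a_le = A_h_finite_imp_avg_h_le[OF ms N ce \<rho>A fin that True, folded a_def K_def]
    have "ereal ((m (tgrid N i) x y)\<^sup>2) * ereal (Q x y * \<pi> x)
        \<le> ereal K * alpha \<theta> (a i x) (a i y) (m (tgrid N i) x y) * ereal (Q x y * \<pi> x)"
      using square_le_mult_alpha[OF \<theta> a_le a_le K] True \<pi>[of x]
      by (intro ereal_mult_right_mono) auto
    then show ?thesis by (simp add: T_def mult.assoc)
  next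
    case False
    then have "Q x y = 0" using Q[of x y] by simp
    then show ?thesis by (simp add: T_def zero_ereal_def[symmetric])
  qed
  have "ereal (\<Sum>i<N. \<Sum>x\<in>UNIV. \<Sum>y\<in>UNIV. (m (tgrid N i) x y)\<^sup>2 * Q x y * \<pi> x)
      \<le> (\<Sum>i<N. \<Sum>x\<in>UNIV. \<Sum>y\<in>UNIV. ereal K * T i x y)"
    unfolding sum_ereal[symmetric] by (intro sum_mono termwise) auto
  also have "\<dots> = ereal K * (\<Sum>i<N. \<Sum>x\<in>UNIV. \<Sum>y\<in>UNIV. T i x y)"
    by (simp add: sum_ereal_right_distrib T_nonneg sum_nonneg)
  finally have "ereal (1 / (2 * real N)) * ereal (\<Sum>i<N. \<Sum>x\<in>UNIV. \<Sum>y\<in>UNIV. (m (tgrid N i) x y)\<^sup>2 * Q x y * \<pi> x)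
      \<le> ereal (1 / (2 * real N)) * (ereal K * (\<Sum>i<N. \<Sum>x\<in>UNIV. \<Sum>y\<in>UNIV. T i x y))"
    by (rule ereal_mult_left_mono) simp
  then show ?thesis
    unfolding A_h_def T_def a_def K_def[symmetric] times_ereal.simps(1)[symmetric]
    by (simp only: mult.left_commute)
qed

theorem lemma3p7:
  fixes Q :: "'x::finite \<Rightarrow> 'x \<Rightarrow> real" and \<pi> :: "'x \<Rightarrow> real" and Ebar :: real
  assumes "markov_setting Q \<pi>"
  shows "\<exists>Mbar::real. \<forall>\<theta> N \<rho>A \<rho>B \<rho> m.
           admissible_theta \<theta> \<longrightarrow> N > 0 \<longrightarrow>
           prob_density \<pi> \<rho>A \<longrightarrow> prob_density \<pi> \<rho>B \<longrightarrow>
           \<rho> \<in> V1 N \<longrightarrow> m \<in> V0 N \<longrightarrow>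
           E_h Q \<pi> \<theta> N \<rho>A \<rho>B \<rho> m \<le> ereal Ebar \<longrightarrow>
           L2norm_edges Q \<pi> m \<le> Mbar"
proof (intro exI[of _ "sqrt ((\<Sum>x\<in>UNIV. 1 / \<pi> x) * \<bar>Ebar\<bar>)"] allI impI)
  fix \<theta> N \<rho>A \<rho>B \<rho> and m :: "real \<Rightarrow> 'x \<Rightarrow> 'x \<Rightarrow> real"
  assume \<theta>: "admissible_theta \<theta>" and N: "N > 0" and \<rho>A: "prob_density \<pi> \<rho>A"
    and m: "m \<in> V0 N" and E: "E_h Q \<pi> \<theta> N \<rho>A \<rho>B \<rho> m \<le> ereal Ebar"
  define K where "K = (\<Sum>x\<in>UNIV. 1 / \<pi> x)"
  have K: "K \<ge> 0"
    unfolding K_def using assms by (intro sum_nonneg) (simp add: markov_setting_def less_imp_le)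
  have ce: "(\<rho>, m) \<in> CE_h Q N \<rho>A \<rho>B" and A: "A_h Q \<pi> \<theta> N \<rho> m \<le> ereal Ebar"
    using E unfolding E_h_def by (auto split: if_splits)
  have "ereal (1 / (2 * real N) * (\<Sum>i<N. \<Sum>x\<in>UNIV. \<Sum>y\<in>UNIV. (m (tgrid N i) x y)\<^sup>2 * Q x y * \<pi> x))
      \<le> ereal K * A_h Q \<pi> \<theta> N \<rho> m"
    unfolding K_def using A by (intro kinetic_energy_le_A_h[OF assms \<theta> N ce \<rho>A]) auto
  also have "\<dots> \<le> ereal K * ereal Ebar"
    using A K by (intro ereal_mult_left_mono) auto
  also have "\<dots> \<le> ereal (K * \<bar>Ebar\<bar>)"
    using K by (simp add: mult_left_mono)
  finally show "L2norm_edges Q \<pi> m \<le> sqrt (K * \<bar>Ebar\<bar>)"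
    unfolding L2norm_edges_V0[OF m N] ereal_less_eq(3) by (rule real_sqrt_le_mono)
qed

end
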